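(* Let $S_n=(E_{n-m},K_m)$ be a word-representable split graph with $m\geq 4$, and let $d$ be an integer with $\frac{m+1}{2}< d\leq m-1$. Then $E_{n-m}$ contains at most $m-d+1$ vertices of degree $d$ having pairwise distinct neighbourhoods. Moreover, this bound is achievable: for every such $m$ and $d$ there is a word-representable split graph $(E_{n-m},K_m)$ whose independent set contains $m-d+1$ vertices of degree $d$ with pairwise distinct neighbourhoods.
   Context: A graph $G=(V,E)$ is word-representable if there exists a word $w$ over the alphabet $V$ such that for all distinct $x,y\in V$, the letters $x$ and $y$ alternate in $w$ if and only if $xy\in E$ (alternation meaning that deleting all letters other than $x$ and $y$ leaves $xyxy\cdots$ or $yxyx\cdots$). The notation $S_n=(E_{n-m},K_m)$ denotes a split graph on $n$ vertices whose vertex set is partitioned into a maximal clique $K_m$ on $m$ vertices and an independent set $E_{n-m}$ on $n-m$ vertices. *)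

theory Defs
  imports Main
begin

definition simple_graph :: "'a set \<Rightarrow> ('a \<Rightarrow> 'a \<Rightarrow> bool) \<Rightarrow> bool" where
  "simple_graph V E \<longleftrightarrow> finite V \<and> (\<forall>x y. E x y \<longrightarrow> x \<in> V \<and> y \<in> V)
     \<and> (\<forall>x y. E x y \<longrightarrow> E y x) \<and> (\<forall>x. \<not> E x x)"

definition alternate_in :: "'a list \<Rightarrow> 'a \<Rightarrow> 'a \<Rightarrow> bool" where
  "alternate_in w x y \<longleftrightarrow>
     (let u = filter (\<lambda>z. z = x \<or> z = y) w in \<forall>i. Suc i < length u \<longrightarrow> u ! i \<noteq> u ! Suc i)"

definition word_represents :: "'a set \<Rightarrow> ('a \<Rightarrow> 'a \<Rightarrow> bool) \<Rightarrow> 'a list \<Rightarrow> bool" where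
  "word_represents V E w \<longleftrightarrow> set w = V \<and>
     (\<forall>x\<in>V. \<forall>y\<in>V. x \<noteq> y \<longrightarrow> (alternate_in w x y \<longleftrightarrow> E x y))"

definition word_representable :: "'a set \<Rightarrow> ('a \<Rightarrow> 'a \<Rightarrow> bool) \<Rightarrow> bool" where
  "word_representable V E \<longleftrightarrow> (\<exists>w. word_represents V E w)"

definition is_clique :: "'a set \<Rightarrow> ('a \<Rightarrow> 'a \<Rightarrow> bool) \<Rightarrow> 'a set \<Rightarrow> bool" where
  "is_clique V E K \<longleftrightarrow> K \<subseteq> V \<and> (\<forall>x\<in>K. \<forall>y\<in>K. x \<noteq> y \<longrightarrow> E x y)"

definition is_maximal_clique :: "'a set \<Rightarrow> ('a \<Rightarrow> 'a \<Rightarrow> bool) \<Rightarrow> 'a set \<Rightarrow> bool" where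
  "is_maximal_clique V E K \<longleftrightarrow> is_clique V E K \<and> (\<forall>v\<in>V - K. \<not> (\<forall>x\<in>K. E v x))"

definition is_independent :: "'a set \<Rightarrow> ('a \<Rightarrow> 'a \<Rightarrow> bool) \<Rightarrow> 'a set \<Rightarrow> bool" where
  "is_independent V E I \<longleftrightarrow> I \<subseteq> V \<and> (\<forall>x\<in>I. \<forall>y\<in>I. \<not> E x y)"

definition split_graph :: "'a set \<Rightarrow> ('a \<Rightarrow> 'a \<Rightarrow> bool) \<Rightarrow> 'a set \<Rightarrow> 'a set \<Rightarrow> bool" where
  "split_graph V E I K \<longleftrightarrow> simple_graph V E \<and> is_maximal_clique V E K \<and> is_independent V E I
     \<and> K \<inter> I = {} \<and> K \<union> I = V"

definition neighbourhood :: "'a set \<Rightarrow> ('a \<Rightarrow> 'a \<Rightarrow> bool) \<Rightarrow> 'a \<Rightarrow> 'a set" where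
  "neighbourhood V E v = {u \<in> V. E v u}"

definition degree :: "'a set \<Rightarrow> ('a \<Rightarrow> 'a \<Rightarrow> bool) \<Rightarrow> 'a \<Rightarrow> nat" where
  "degree V E v = card (neighbourhood V E v)"

end

(*
  Two letters x, y alternate in a word iff the prefix count of one of them "leads" that of the
  other, i.e. is at every time equal to it or one larger. Listing the clique K in order of first
  occurrence as k_0, ..., k_(m-1), each k_i leads all later ones. Continue this list periodically,
  letting position i + j m stand for the count of k_i lowered by j: the counts then never increase along
  the positions. An independent vertex a is adjacent to k_i iff its count is led by position i or
  by position i + m; these positions form an interval of length deg a, so N(a) is a cyclic interval
  of the clique determined by its start modulo m. If the starts of two independent vertices of
  degree d differ cyclically by between m - d + 1 and d - 1, the count of one is squeezed within
  one of the count of the other, so they would alternate, i.e. be adjacent. Hence the starts of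
  vertices with distinct neighbourhoods are residues mod m at pairwise cyclic distance at most
  m - d, and there are at most m - d + 1 of them.
  For sharpness, the independent vertices m + s (s <= m - d) with N(m + s) = {s, ..., s + d - 1}
  are realised by a word in four blocks.
*)

theory Submission
  imports Defs "HOL-Library.Infinite_Set"
begin

section \<open>Alternation and prefix counts\<close>

definition occ :: "'a list \<Rightarrow> 'a \<Rightarrow> nat \<Rightarrow> int" where
  "occ w x t = int (count_list (take t w) x)"

definition leads :: "(nat \<Rightarrow> int) \<Rightarrow> (nat \<Rightarrow> int) \<Rightarrow> bool" where
  "leads f g \<longleftrightarrow> (\<forall>t. g t \<le> f t \<and> f t \<le> g t + 1)"

lemma occ_0 [simp]: "occ w x 0 = 0"
  by (simp add: occ_def)

lemma occ_Cons_Suc [simp]: "occ (z # w) x (Suc t) = occ w x t + (if z = x then 1 else 0)"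
  by (simp add: occ_def)

lemma leads_iff_Suc:
  "leads f g \<longleftrightarrow> g 0 \<le> f 0 \<and> f 0 \<le> g 0 + 1 \<and> leads (\<lambda>t. f (Suc t)) (\<lambda>t. g (Suc t))"
  unfolding leads_def by (metis not0_implies_Suc)

lemma leads_minus_one_iff: "leads f (\<lambda>t. g t - 1) \<longleftrightarrow> leads g f"
proof -
  have "(g t - 1 \<le> f t \<and> f t \<le> g t - 1 + 1) \<longleftrightarrow> (f t \<le> g t \<and> g t \<le> f t + 1)" for t
    by linarith
  then show ?thesis
    unfolding leads_def by simp
qed

lemma leads_occ_Cons:
  assumes "x \<noteq> y"
  shows "leads (occ (z # w) x) (occ (z # w) y) \<longleftrightarrow>
    (if z = x then leads (occ w y) (occ w x) else z \<noteq> y \<and> leads (occ w x) (occ w y))"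
proof -
  have "leads (\<lambda>t. f t + 1) g \<longleftrightarrow> leads g f" for f g :: "nat \<Rightarrow> int"
    unfolding leads_def by auto
  moreover have "\<not> leads f (\<lambda>t. g t + 1)" if "f 0 = 0" "g 0 = 0" for f g :: "nat \<Rightarrow> int"
    using that unfolding leads_def by (metis add_0 not_one_le_zero)
  ultimately show ?thesis
    using assms by (subst leads_iff_Suc) auto
qed

lemma filter_pair_commute:
  "filter (\<lambda>z. z = y \<or> z = x) w = filter (\<lambda>z. z = x \<or> z = y) w"
  by (metis disj_commute)

lemma leads_occ_iff_distinct_adj:
  assumes "x \<noteq> y"
  shows "leads (occ w x) (occ w y) \<longleftrightarrow>
    (let u = filter (\<lambda>z. z = x \<or> z = y) w in distinct_adj u \<and> (u = [] \<or> hd u = x))"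
  using assms
proof (induction w arbitrary: x y)
  case Nil
  then show ?case by (simp add: leads_def occ_def)
next
  case (Cons z w)
  have "hd (filter (\<lambda>z. z = x \<or> z = y) w) \<in> {x, y}" if "filter (\<lambda>z. z = x \<or> z = y) w \<noteq> []"
    using hd_in_set[OF that] by auto
  then show ?case
    using Cons.IH[of x y] Cons.IH[of y x] Cons.prems
    by (auto simp: leads_occ_Cons Let_def filter_pair_commute[of y x] distinct_adj_Cons)
qed

lemma alternate_in_iff_distinct_adj:
  "alternate_in w x y \<longleftrightarrow> distinct_adj (filter (\<lambda>z. z = x \<or> z = y) w)"
  by (simp add: alternate_in_def distinct_adj_conv_nth Let_def)

lemma alternate_in_commute: "alternate_in w x y \<longleftrightarrow> alternate_in w y x"
  by (simp add: alternate_in_iff_distinct_adj filter_pair_commute[of x y])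

lemma alternate_in_iff_leads:
  assumes "x \<noteq> y"
  shows "alternate_in w x y \<longleftrightarrow> leads (occ w x) (occ w y) \<or> leads (occ w y) (occ w x)"
proof -
  define u where "u = filter (\<lambda>z. z = x \<or> z = y) w"
  have "hd u = x \<or> hd u = y" if "u \<noteq> []"
    using hd_in_set[OF that] by (auto simp: u_def)
  moreover have "alternate_in w x y \<longleftrightarrow> distinct_adj u"
    by (simp add: alternate_in_iff_distinct_adj u_def)
  ultimately show ?thesis
    using leads_occ_iff_distinct_adj[OF assms, of w] leads_occ_iff_distinct_adj[of y x w] assms
    by (auto simp: Let_def filter_pair_commute[of y x] u_def[symmetric])
qed

lemma occ_neq:
  assumes "x \<in> set w" "x \<noteq> y"
  shows "occ w x \<noteq> occ w y"
proof
  assume eq: "occ w x = occ w y"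
  obtain p where p: "p < length w" "w ! p = x"
    using assms(1) by (metis in_set_conv_nth)
  have "take (Suc p) w = take p w @ [x]"
    using p by (simp add: take_Suc_conv_app_nth)
  then have "occ w x (Suc p) = occ w x p + 1" "occ w y (Suc p) = occ w y p"
    using assms(2) by (auto simp: occ_def)
  then show False
    using eq by simp
qed

section \<open>Enumerating a clique by first occurrence\<close>

definition first_pos :: "'a list \<Rightarrow> 'a \<Rightarrow> nat" where
  "first_pos w x = (LEAST p. w ! p = x)"

lemma nth_first_pos:
  assumes "x \<in> set w"
  shows "first_pos w x < length w" "w ! first_pos w x = x"
proof -
  obtain p where p: "p < length w" "w ! p = x"
    using assms by (metis in_set_conv_nth)
  show "w ! first_pos w x = x"
    unfolding first_pos_def using p(2) by (rule LeastI)
  have "first_pos w x \<le> p"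
    unfolding first_pos_def using p(2) by (rule Least_le)
  then show "first_pos w x < length w"
    using p(1) by simp
qed

lemma inj_on_first_pos: "inj_on (first_pos w) (set w)"
  by (rule inj_onI) (metis nth_first_pos(2))

lemma leads_if_first_pos_less:
  assumes "alternate_in w x y" "x \<in> set w" "first_pos w x < first_pos w y"
  shows "leads (occ w x) (occ w y)"
proof -
  define p where "p = first_pos w x"
  have "x \<noteq> y"
    using assms(3) by auto
  have "occ w x (Suc p) \<ge> 1"
    using nth_first_pos[OF assms(2)] by (simp add: occ_def p_def take_Suc_conv_app_nth)
  moreover have "y \<notin> set (take (Suc p) w)"
  proof
    assume "y \<in> set (take (Suc p) w)"
    then obtain q where "q \<le> p" "w ! q = y"
      by (auto simp: in_set_conv_nth less_Suc_eq_le)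
    have "first_pos w y \<le> q"
      unfolding first_pos_def using \<open>w ! q = y\<close> by (rule Least_le)
    then show False
      using \<open>q \<le> p\<close> assms(3) p_def by simp
  qed
  then have "occ w y (Suc p) = 0"
    by (simp add: occ_def)
  ultimately have "\<not> leads (occ w y) (occ w x)"
    unfolding leads_def by (smt (verit))
  then show ?thesis
    using assms(1) alternate_in_iff_leads[OF \<open>x \<noteq> y\<close>] by blast
qed

lemma clique_enumeration:
  assumes "K \<subseteq> set w" and clique: "\<And>x y. x \<in> K \<Longrightarrow> y \<in> K \<Longrightarrow> x \<noteq> y \<Longrightarrow> alternate_in w x y"
  obtains \<kappa> where "bij_betw \<kappa> {..<card K} K"
    and "\<And>i j. i < j \<Longrightarrow> j < card K \<Longrightarrow> leads (occ w (\<kappa> i)) (occ w (\<kappa> j))"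
proof -
  have inj: "inj_on (first_pos w) K"
    using inj_on_first_pos assms(1) by (rule inj_on_subset)
  have "finite (first_pos w ` K)"
    using assms(1) finite_subset by auto
  then obtain e where "bij_betw e {..<card (first_pos w ` K)} (first_pos w ` K)"
    and "strict_mono_on {..<card (first_pos w ` K)} e"
    by (rule ex_bij_betw_strict_mono_card)
  then have e: "bij_betw e {..<card K} (first_pos w ` K)" and mono: "strict_mono_on {..<card K} e"
    by (simp_all add: card_image[OF inj])
  define \<kappa> where "\<kappa> = inv_into K (first_pos w) \<circ> e"
  have bij: "bij_betw \<kappa> {..<card K} K"
    unfolding \<kappa>_def by (rule bij_betw_trans[OF e bij_betw_inv_into[OF inj_on_imp_bij_betw[OF inj]]])
  have first_pos_\<kappa>: "first_pos w (\<kappa> i) = e i" if "i < card K" for i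
  proof -
    have "e i \<in> first_pos w ` K"
      using e that by (auto simp: bij_betw_def)
    then show ?thesis
      unfolding \<kappa>_def by (simp add: f_inv_into_f)
  qed
  have "leads (occ w (\<kappa> i)) (occ w (\<kappa> j))" if "i < j" "j < card K" for i j
  proof (rule leads_if_first_pos_less)
    have "\<kappa> i \<in> K" "\<kappa> j \<in> K"
      using bij that by (auto simp: bij_betw_def)
    moreover have "first_pos w (\<kappa> i) < first_pos w (\<kappa> j)"
      using mono that first_pos_\<kappa> by (simp add: strict_mono_on_def)
    moreover from this have "\<kappa> i \<noteq> \<kappa> j"
      by auto
    ultimately show "alternate_in w (\<kappa> i) (\<kappa> j)" "\<kappa> i \<in> set w"
      "first_pos w (\<kappa> i) < first_pos w (\<kappa> j)"
      using clique assms(1) by auto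
  qed
  then show ?thesis
    using bij that by blast
qed

section \<open>Residues at small cyclic distance\<close>

lemma card_le_if_no_pair_at_distance:
  fixes D :: "int set" and M r :: int
  assumes D: "D \<subseteq> {0..r} \<union> {M - r..<M}" and r: "0 \<le> r" "r \<le> M"
    and no_pair: "\<And>x. x \<in> D \<Longrightarrow> x + (M - r - 1) \<notin> D"
  shows "card D \<le> nat (r + 1)"
proof -
  define squeeze where "squeeze x = (if x \<le> r then x else x - (M - r - 1))" for x
  have "inj_on squeeze D"
  proof (rule inj_onI)
    fix x y assume xy: "x \<in> D" "y \<in> D" "squeeze x = squeeze y"
    show "x = y"
    proof (cases "x \<le> r"; cases "y \<le> r")
      assume "x \<le> r" "\<not> y \<le> r"
      then show ?thesis
        using xy no_pair[of x] by (simp add: squeeze_def)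
    next
      assume "\<not> x \<le> r" "y \<le> r"
      then have "x = y + (M - r - 1)"
        using xy(3) by (simp add: squeeze_def)
      then show ?thesis
        using xy no_pair[of y] by simp
    qed (use xy in \<open>auto simp: squeeze_def\<close>)
  qed
  then have "card D = card (squeeze ` D)"
    by (simp add: card_image)
  also have "\<dots> \<le> card {0..r}"
    using D r by (intro card_mono) (force simp: squeeze_def)+
  finally show ?thesis
    by simp
qed

lemma inj_on_mod_diff:
  fixes T :: "int set"
  assumes "T \<subseteq> {0..<M}"
  shows "inj_on (\<lambda>v. (v - u) mod M) T"
proof (rule inj_onI)
  fix v v' assume "v \<in> T" "v' \<in> T" "(v - u) mod M = (v' - u) mod M"
  then have "(v - u + u) mod M = (v' - u + u) mod M"
    by (metis mod_add_left_eq)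
  then show "v = v'"
    using assms \<open>v \<in> T\<close> \<open>v' \<in> T\<close> by (auto simp: mod_pos_pos_trivial subset_iff)
qed

lemma card_cyclically_close_residues:
  fixes T :: "int set" and M r :: int
  assumes T: "T \<subseteq> {0..<M}" and r: "0 \<le> r" "2 * r + 2 \<le> M"
    and close: "\<And>u v. u \<in> T \<Longrightarrow> v \<in> T \<Longrightarrow> \<not> (r + 1 \<le> (v - u) mod M \<and> (v - u) mod M \<le> M - r - 1)"
  shows "card T \<le> nat (r + 1)"
proof (cases "T = {}")
  case False
  then obtain u where u: "u \<in> T"
    by blast
  define shift where "shift v = (v - u) mod M" for v
  have "card T = card (shift ` T)"
    using inj_on_mod_diff[OF T] by (simp add: card_image shift_def)
  also have "\<dots> \<le> nat (r + 1)"
  proof (rule card_le_if_no_pair_at_distance)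
    show "shift ` T \<subseteq> {0..r} \<union> {M - r..<M}"
      using close[OF u] r by (fastforce simp: shift_def)
    show "0 \<le> r" "r \<le> M"
      using r by simp_all
    fix x assume "x \<in> shift ` T"
    then obtain v where v: "v \<in> T" "x = shift v"
      by blast
    show "x + (M - r - 1) \<notin> shift ` T"
    proof
      assume "x + (M - r - 1) \<in> shift ` T"
      then obtain v' where "v' \<in> T" "shift v' - shift v = M - r - 1"
        using v(2) by force
      then have "(v' - v) mod M = (M - r - 1) mod M"
        unfolding shift_def by (metis mod_diff_eq diff_diff_cancel diff_diff_eq2 add_diff_cancel_left')
      also have "\<dots> = M - r - 1"
        using r by (intro mod_pos_pos_trivial) auto
      finally show False
        using close[OF v(1) \<open>v' \<in> T\<close>] r by linarith
    qed
  qed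
  finally show ?thesis .
qed simp

section \<open>The upper bound\<close>

lemma finite_convex_int_set_eq_Icc:
  fixes A :: "int set"
  assumes "finite A" "A \<noteq> {}"
    and convex: "\<And>n p q. n \<in> A \<Longrightarrow> q \<in> A \<Longrightarrow> n \<le> p \<Longrightarrow> p \<le> q \<Longrightarrow> p \<in> A"
  shows "A = {Min A..Min A + int (card A) - 1}"
proof -
  have "{Min A..Max A} \<subseteq> A"
    using convex[OF Min_in[OF assms(1,2)] Max_in[OF assms(1,2)]] by auto
  then have A: "A = {Min A..Max A}"
    using assms(1) by auto
  moreover have "Min A \<le> Max A"
    using assms(1,2) by simp
  moreover have "card {Min A..Max A} = nat (Max A - Min A + 1)"
    by simp
  ultimately have "int (card A) = Max A - Min A + 1"
    by simp
  then show ?thesis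
    using A by simp
qed

locale labelled_split_word =
  fixes V :: "'a set" and E :: "'a \<Rightarrow> 'a \<Rightarrow> bool" and I K :: "'a set"
    and w :: "'a list" and m :: nat and \<kappa> :: "nat \<Rightarrow> 'a"
  assumes split: "split_graph V E I K"
    and rep: "word_represents V E w"
    and m_pos: "0 < m"
    and bij_\<kappa>: "bij_betw \<kappa> {..<m} K"
    and \<kappa>_leads: "\<And>i j. i < j \<Longrightarrow> j < m \<Longrightarrow> leads (occ w (\<kappa> i)) (occ w (\<kappa> j))"
begin

lemma set_w: "set w = V"
  using rep by (simp add: word_represents_def)

lemma E_iff_leads:
  "x \<in> V \<Longrightarrow> y \<in> V \<Longrightarrow> x \<noteq> y \<Longrightarrow>
    E x y \<longleftrightarrow> leads (occ w x) (occ w y) \<or> leads (occ w y) (occ w x)"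
  using rep alternate_in_iff_leads[of x y w] by (simp add: word_represents_def)

lemma E_in_V: "E x y \<Longrightarrow> y \<in> V"
  using split by (simp add: split_graph_def simple_graph_def)

lemma I_subset_V: "a \<in> I \<Longrightarrow> a \<in> V"
  using split by (auto simp: split_graph_def)

lemma not_E_I: "a \<in> I \<Longrightarrow> b \<in> I \<Longrightarrow> \<not> E a b"
  using split by (simp add: split_graph_def is_independent_def)

lemma \<kappa>_in_K: "i < m \<Longrightarrow> \<kappa> i \<in> K"
  using bij_\<kappa> by (auto simp: bij_betw_def)

lemma \<kappa>_notin_I: "i < m \<Longrightarrow> \<kappa> i \<notin> I"
  using split \<kappa>_in_K by (auto simp: split_graph_def)

lemma \<kappa>_in_V: "i < m \<Longrightarrow> \<kappa> i \<in> V"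
  using split \<kappa>_in_K by (auto simp: split_graph_def)

lemma occ_\<kappa>_antimono: "i \<le> j \<Longrightarrow> j < m \<Longrightarrow> occ w (\<kappa> j) t \<le> occ w (\<kappa> i) t"
  using \<kappa>_leads[of i j] by (cases "i = j") (auto simp: leads_def)

lemma occ_\<kappa>_le_Suc: "i < m \<Longrightarrow> j < m \<Longrightarrow> occ w (\<kappa> i) t \<le> occ w (\<kappa> j) t + 1"
  using \<kappa>_leads[of i j] occ_\<kappa>_antimono[of j i t] by (cases "i < j") (auto simp: leads_def)

definition label :: "int \<Rightarrow> 'a" where
  "label n = \<kappa> (nat (n mod int m))"

text \<open>Position \<open>i + k m\<close> stands for \<open>\<kappa> i\<close> with its count lowered by \<open>k\<close>. These counts are
  non-increasing in the position, and \<open>\<kappa> i\<close> leads \<open>a\<close> iff \<open>a\<close> leads position \<open>i + m\<close>.\<close>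

definition clique_count :: "int \<Rightarrow> nat \<Rightarrow> int" where
  "clique_count n t = occ w (label n) t - n div int m"

definition window :: "'a \<Rightarrow> int set" where
  "window a = {n. leads (occ w a) (clique_count n)}"

lemma label_add_mult: "label (n + k * int m) = label n"
  by (simp add: label_def)

lemma clique_count_add_mult: "clique_count (n + k * int m) t = clique_count n t - k"
  using m_pos by (simp add: clique_count_def label_add_mult)

lemma label_of_nat: "i < m \<Longrightarrow> label (int i) = \<kappa> i"
  by (simp add: label_def)

lemma clique_count_of_nat: "i < m \<Longrightarrow> clique_count (int i) = occ w (\<kappa> i)"
  by (simp add: clique_count_def label_of_nat fun_eq_iff)

lemma clique_count_high: "i < m \<Longrightarrow> clique_count (int i + int m) t = occ w (\<kappa> i) t - 1"
  using clique_count_add_mult[of "int i" 1] clique_count_of_nat by simp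

lemma clique_count_antimono:
  assumes "n \<le> p"
  shows "clique_count p t \<le> clique_count n t"
proof -
  define i j where "i = nat (n mod int m)" and "j = nat (p mod int m)"
  have m: "0 < int m"
    using m_pos by simp
  have ij: "i < m" "j < m"
    using m by (simp_all add: i_def j_def nat_less_iff)
  have n: "n = n div int m * int m + int i" and p: "p = p div int m * int m + int j"
    using m by (simp_all add: i_def j_def)
  have "n div int m \<le> p div int m"
    using assms m by (simp add: zdiv_mono1)
  then consider "n div int m = p div int m" | "n div int m + 1 \<le> p div int m"
    by linarith
  then show ?thesis
  proof cases
    case 1
    then have "i \<le> j"
      using assms n p by (metis add_le_cancel_left of_nat_le_iff)
    then show ?thesis
      using 1 occ_\<kappa>_antimono[of i j t] ij by (simp add: clique_count_def label_def i_def j_def)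
  next
    case 2
    then show ?thesis
      using occ_\<kappa>_le_Suc[of j i t] ij by (simp add: clique_count_def label_def i_def j_def)
  qed
qed

lemma E_\<kappa>_iff_window:
  assumes "a \<in> I" "i < m"
  shows "E a (\<kappa> i) \<longleftrightarrow> int i \<in> window a \<or> int i + int m \<in> window a"
proof -
  have "clique_count (int i + int m) = (\<lambda>t. occ w (\<kappa> i) t - 1)"
    using clique_count_high[OF assms(2)] by (simp add: fun_eq_iff)
  moreover have "a \<noteq> \<kappa> i"
    using \<kappa>_notin_I assms by auto
  ultimately show ?thesis
    using E_iff_leads[OF I_subset_V[OF assms(1)] \<kappa>_in_V[OF assms(2)]] clique_count_of_nat[OF assms(2)]
    by (simp add: window_def leads_minus_one_iff)
qed

lemma window_subset: "window a \<subseteq> {0..<2 * int m}"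
proof
  fix n assume "n \<in> window a"
  then have "clique_count n 0 \<le> occ w a 0 \<and> occ w a 0 \<le> clique_count n 0 + 1"
    unfolding window_def leads_def by blast
  then have "0 \<le> n div int m" "n div int m \<le> 1"
    by (simp_all add: clique_count_def)
  then have "0 \<le> n div int m * int m" "n div int m * int m \<le> 1 * int m"
    using mult_right_mono[of "n div int m" 1 "int m"] by simp_all
  moreover have "0 \<le> n mod int m" "n mod int m < int m"
    using m_pos by simp_all
  ultimately have "0 \<le> n" "n < 2 * int m"
    using div_mult_mod_eq[of n "int m"] by linarith+
  then show "n \<in> {0..<2 * int m}"
    by simp
qed

lemma window_cases:
  assumes "n \<in> window a"
  obtains (low) i where "i < m" "n = int i" | (high) i where "i < m" "n = int i + int m"
proof -
  have "n \<in> {0..<2 * int m}"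
    using window_subset assms by blast
  then have n: "0 \<le> n" "n < 2 * int m"
    by simp_all
  show thesis
  proof (cases "n < int m")
    case True
    then show thesis
      using low[of "nat n"] n by simp
  next
    case False
    then show thesis
      using high[of "nat (n - int m)"] n by simp
  qed
qed

lemma label_high: "label (int i + int m) = label (int i)"
  using label_add_mult[of "int i" 1] by simp

lemma window_convex:
  assumes "n \<in> window a" "q \<in> window a" "n \<le> p" "p \<le> q"
  shows "p \<in> window a"
  unfolding window_def leads_def
proof (intro CollectI allI)
  fix t
  have "clique_count p t \<le> clique_count n t" "clique_count q t \<le> clique_count p t"
    using clique_count_antimono assms(3,4) by auto
  then show "clique_count p t \<le> occ w a t \<and> occ w a t \<le> clique_count p t + 1"
    using assms(1,2) unfolding window_def leads_def by (smt (verit) mem_Collect_eq)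
qed

lemma window_add_m:
  assumes "a \<in> I" "n \<in> window a"
  shows "n + int m \<notin> window a"
proof
  assume high: "n + int m \<in> window a"
  have "n \<in> {0..<2 * int m}" "n + int m \<in> {0..<2 * int m}"
    using window_subset assms(2) high by blast+
  then obtain i where i: "i < m" "n = int i"
    by (metis atLeastLessThan_iff add_less_cancel_right mult_2 nonneg_int_cases of_nat_less_iff)
  have "occ w a t = occ w (\<kappa> i) t" for t
    using assms(2) high i clique_count_of_nat[OF i(1)] clique_count_high[OF i(1), of t]
    unfolding window_def leads_def by (smt (verit) mem_Collect_eq)
  moreover have "a \<noteq> \<kappa> i"
    using \<kappa>_notin_I assms i by auto
  ultimately show False
    using occ_neq[of a w "\<kappa> i"] set_w I_subset_V[OF assms(1)] by auto
qed

lemma K_eq_image: "K = \<kappa> ` {..<m}"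
  using bij_\<kappa> by (simp add: bij_betw_def)

lemma neighbourhood_eq_label_window:
  assumes a: "a \<in> I"
  shows "neighbourhood V E a = label ` window a"
proof (intro equalityI subsetI)
  fix x assume "x \<in> neighbourhood V E a"
  then have x: "x \<in> V" "E a x"
    by (auto simp: neighbourhood_def)
  then have "x \<in> K"
    using split not_E_I[OF a] by (auto simp: split_graph_def)
  then obtain i where i: "i < m" "x = \<kappa> i"
    using K_eq_image by auto
  then have "int i \<in> window a \<or> int i + int m \<in> window a"
    using E_\<kappa>_iff_window[OF a i(1)] x(2) by simp
  moreover have "label (int i) = x" "label (int i + int m) = x"
    using i label_of_nat label_high by simp_all
  ultimately show "x \<in> label ` window a"
    by (auto intro: rev_image_eqI)
next
  fix x assume "x \<in> label ` window a"
  then obtain n where n: "n \<in> window a" "x = label n"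
    by blast
  then obtain i where i: "i < m" "n = int i \<or> n = int i + int m"
    by (cases rule: window_cases) auto
  then have "x = \<kappa> i" "E a (\<kappa> i)"
    using n E_\<kappa>_iff_window[OF a] label_of_nat label_high by auto
  then show "x \<in> neighbourhood V E a"
    using E_in_V by (simp add: neighbourhood_def)
qed

lemma inj_on_label_window:
  assumes a: "a \<in> I"
  shows "inj_on label (window a)"
proof (rule inj_onI)
  fix n n' assume nn': "n \<in> window a" "n' \<in> window a" "label n = label n'"
  obtain i where i: "i < m" "n = int i \<or> n = int i + int m"
    using nn'(1) by (cases rule: window_cases) auto
  obtain j where j: "j < m" "n' = int j \<or> n' = int j + int m"
    using nn'(2) by (cases rule: window_cases) auto
  have "\<kappa> i = \<kappa> j"
    using nn'(3) i j label_of_nat label_high by auto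
  then have "i = j"
    using bij_\<kappa> i(1) j(1) by (auto simp: bij_betw_def inj_on_def)
  then show "n = n'"
    using i(2) j(2) nn'(1,2) window_add_m[OF a] by auto
qed

lemma card_window: "a \<in> I \<Longrightarrow> card (window a) = degree V E a"
  by (simp add: degree_def neighbourhood_eq_label_window card_image inj_on_label_window)

definition window_start :: "'a \<Rightarrow> int" where
  "window_start a = Min (window a)"

lemma window_eq_Icc:
  assumes "a \<in> I" "0 < degree V E a"
  shows "window a = {window_start a..window_start a + int (degree V E a) - 1}"
proof -
  have "window a = {Min (window a)..Min (window a) + int (card (window a)) - 1}"
  proof (rule finite_convex_int_set_eq_Icc)
    show "finite (window a)"
      using window_subset finite_subset by blast
    show "window a \<noteq> {}"
      using assms card_window by fastforce
  qed (rule window_convex)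
  then show ?thesis
    using card_window[OF assms(1)] by (simp add: window_start_def)
qed

lemma leads_if_window_offset:
  assumes a: "\<alpha> \<in> window a" "\<alpha> + int d - 1 \<in> window a"
    and b: "\<beta> \<in> window b" "\<beta> + int d - 1 \<in> window b"
    and offset: "int m - int d + 1 \<le> (\<beta> - \<alpha>) mod int m" "(\<beta> - \<alpha>) mod int m \<le> int d - 1"
  shows "leads (occ w a) (occ w b) \<or> leads (occ w b) (occ w a)"
proof -
  define q \<delta> where "q = (\<beta> - \<alpha>) div int m" and "\<delta> = (\<beta> - \<alpha>) mod int m"
  have \<beta>: "\<beta> = \<alpha> + \<delta> + q * int m" "\<beta> + int d - 1 = \<alpha> + \<delta> + int d - 1 + q * int m"
    using div_mult_mod_eq[of "\<beta> - \<alpha>" "int m"] by (simp_all add: q_def \<delta>_def)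
  text \<open>Moved back by \<open>q m\<close>, the window of \<open>b\<close> starts inside the window of \<open>a\<close> and ends inside
    its translate by \<open>m\<close>, so monotonicity squeezes the count of \<open>b\<close> against that of \<open>a\<close>.\<close>
  have sandwich: "occ w b t + q \<le> occ w a t \<and> occ w a t \<le> occ w b t + q + 1" for t
  proof -
    have "clique_count (\<alpha> + \<delta> + int d - 1) t \<le> clique_count (\<alpha> + 1 * int m) t"
      "clique_count (\<alpha> + int d - 1) t \<le> clique_count (\<alpha> + \<delta>) t"
      using offset by (simp_all add: clique_count_antimono \<delta>_def)
    then show ?thesis
      using a b clique_count_add_mult[of \<alpha> 1 t] clique_count_add_mult[of "\<alpha> + \<delta>" q t]
        clique_count_add_mult[of "\<alpha> + \<delta> + int d - 1" q t]
      unfolding \<beta> window_def leads_def by (smt (verit) mem_Collect_eq)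
  qed
  then consider "q = 0" | "q = -1"
    by (smt (verit) occ_0)
  then show ?thesis
  proof cases
    case 1
    then have "leads (occ w a) (occ w b)"
      using sandwich by (simp add: leads_def)
    then show ?thesis ..
  next
    case 2
    then have "leads (occ w b) (occ w a)"
      using sandwich unfolding leads_def by (smt (verit))
    then show ?thesis ..
  qed
qed

lemma label_image_Icc_mod:
  assumes "\<alpha> mod int m = \<alpha>' mod int m"
  shows "label ` {\<alpha>..\<alpha> + c} = label ` {\<alpha>'..\<alpha>' + c}"
proof -
  define k where "k = \<alpha>' div int m - \<alpha> div int m"
  have "\<alpha>' = \<alpha> + k * int m"
    using assms div_mult_mod_eq[of \<alpha> "int m"] div_mult_mod_eq[of \<alpha>' "int m"]
    unfolding k_def left_diff_distrib by linarith
  then have "(\<lambda>n. n + k * int m) ` {\<alpha>..\<alpha> + c} = {\<alpha>'..\<alpha>' + c}"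
    by (simp add: ac_simps)
  then show ?thesis
    by (metis (no_types, lifting) image_cong image_image label_add_mult)
qed

lemma window_ends:
  assumes "a \<in> I" "degree V E a = d" "0 < d"
  shows "window_start a \<in> window a" "window_start a + int d - 1 \<in> window a"
  using window_eq_Icc[of a] assms by auto

lemma neighbourhood_eq_if_window_start_mod_eq:
  assumes "a \<in> I" "b \<in> I" "degree V E a = d" "degree V E b = d" "0 < d"
    and "window_start a mod int m = window_start b mod int m"
  shows "neighbourhood V E a = neighbourhood V E b"
proof -
  have "neighbourhood V E x = label ` {window_start x..window_start x + (int d - 1)}"
    if "x \<in> I" "degree V E x = d" for x
    using that assms(5) neighbourhood_eq_label_window window_eq_Icc by (simp add: add_diff_eq)
  then show ?thesis
    using assms(1-4) label_image_Icc_mod[OF assms(6)] by metis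
qed

lemma window_starts_cyclically_close:
  assumes "a \<in> I" "b \<in> I" "degree V E a = d" "degree V E b = d" "0 < d" "d \<le> m"
  shows "\<not> (int m - int d + 1 \<le> (window_start b - window_start a) mod int m
      \<and> (window_start b - window_start a) mod int m \<le> int d - 1)"
proof
  assume far: "int m - int d + 1 \<le> (window_start b - window_start a) mod int m
      \<and> (window_start b - window_start a) mod int m \<le> int d - 1"
  then have "leads (occ w a) (occ w b) \<or> leads (occ w b) (occ w a)"
    using leads_if_window_offset[OF window_ends[OF assms(1,3,5)] window_ends[OF assms(2,4,5)]] by blast
  moreover have "a \<noteq> b"
    using far assms(6) by auto
  ultimately have "E a b"
    using E_iff_leads I_subset_V assms(1,2) by blast
  then show False
    using not_E_I assms(1,2) by blast
qed

lemma card_le_if_distinct_neighbourhoods: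
  assumes S: "S \<subseteq> I" and deg: "\<And>v. v \<in> S \<Longrightarrow> degree V E v = d"
    and inj: "inj_on (neighbourhood V E) S" and d: "m + 1 < 2 * d" "d \<le> m"
  shows "card S \<le> m - d + 1"
proof -
  define u where "u a = window_start a mod int m" for a
  have "inj_on u S"
  proof (rule inj_onI)
    fix a b assume "a \<in> S" "b \<in> S" "u a = u b"
    then have "neighbourhood V E a = neighbourhood V E b"
      using S deg d by (intro neighbourhood_eq_if_window_start_mod_eq) (auto simp: u_def)
    then show "a = b"
      using inj \<open>a \<in> S\<close> \<open>b \<in> S\<close> by (auto dest: inj_onD)
  qed
  then have "card S = card (u ` S)"
    by (simp add: card_image)
  also have "\<dots> \<le> nat (int m - int d + 1)"
  proof (rule card_cyclically_close_residues)
    show "u ` S \<subseteq> {0..<int m}"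
      using m_pos by (auto simp: u_def)
    show "0 \<le> int m - int d" "2 * (int m - int d) + 2 \<le> int m"
      using d by presburger+
    fix x y assume "x \<in> u ` S" "y \<in> u ` S"
    then obtain a b where ab: "a \<in> S" "b \<in> S" "x = u a" "y = u b"
      by blast
    then show "\<not> (int m - int d + 1 \<le> (y - x) mod int m \<and> (y - x) mod int m \<le> int m - (int m - int d) - 1)"
      using window_starts_cyclically_close[of a b d] S deg d by (simp add: u_def mod_diff_eq subset_iff)
  qed
  finally show ?thesis
    using d by linarith
qed

end

theorem card_distinct_neighbourhoods_le:
  assumes split: "split_graph V E I K" and "word_representable V E"
    and S: "S \<subseteq> I" "\<forall>v\<in>S. degree V E v = d" "inj_on (neighbourhood V E) S"
    and d: "card K + 1 < 2 * d" "d \<le> card K"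
  shows "card S \<le> card K - d + 1"
proof -
  obtain w where rep: "word_represents V E w"
    using \<open>word_representable V E\<close> unfolding word_representable_def by blast
  have K: "K \<subseteq> V" "\<forall>x\<in>K. \<forall>y\<in>K. x \<noteq> y \<longrightarrow> E x y"
    using split by (auto simp: split_graph_def is_maximal_clique_def is_clique_def)
  have K_w: "K \<subseteq> set w"
    using K(1) rep by (simp add: word_represents_def)
  have clique: "alternate_in w x y" if "x \<in> K" "y \<in> K" "x \<noteq> y" for x y
  proof -
    have "x \<in> V" "y \<in> V" "E x y"
      using K that by auto
    then show ?thesis
      using rep that(3) by (simp add: word_represents_def)
  qed
  obtain \<kappa> where "bij_betw \<kappa> {..<card K} K"
    and "\<And>i j. i < j \<Longrightarrow> j < card K \<Longrightarrow> leads (occ w (\<kappa> i)) (occ w (\<kappa> j))"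
    using clique_enumeration[OF K_w clique] by metis
  then interpret labelled_split_word V E I K w "card K" \<kappa>
    using split rep d by unfold_locales auto
  show ?thesis
    using card_le_if_distinct_neighbourhoods S d by blast
qed

section \<open>A split graph attaining the bound\<close>

lemma filter_pair_upt:
  assumes "a < b"
  shows "filter (\<lambda>z. z = a \<or> z = b) [i..<j] =
    (if i \<le> a \<and> a < j then [a] else []) @ (if i \<le> b \<and> b < j then [b] else [])"
  using assms by (induction j) auto

locale split_construction =
  fixes m d :: nat
  assumes d_pos: "0 < d" and d_less: "d < m"
begin

definition key_before :: "nat \<Rightarrow> nat" where
  "key_before z = (if z < m then 2 * z + 1 else 2 * (z - m))"

definition key_after :: "nat \<Rightarrow> nat" where
  "key_after z = (if z < m then 2 * z else 2 * (z - m + d - 1) + 1)"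

text \<open>The independent vertex \<open>m + s\<close> comes right before \<open>s\<close> in the first block and right after
  \<open>s + d - 1\<close> in the third, so it alternates exactly with \<open>s, \<dots>, s + d - 1\<close>.\<close>

definition word :: "nat list" where
  "word = sort_key key_before [0..<2 * m - d + 1] @ rev [m..<2 * m - d + 1]
    @ sort_key key_after [0..<2 * m - d + 1] @ [0..<m]"

lemma filter_word:
  assumes "a < b" "b < 2 * m - d + 1"
  shows "filter (\<lambda>z. z = a \<or> z = b) word =
    sort_key key_before [a, b] @ rev (filter (\<lambda>z. z = a \<or> z = b) [m..<2 * m - d + 1])
    @ sort_key key_after [a, b] @ filter (\<lambda>z. z = a \<or> z = b) [0..<m]"
  using assms by (simp add: word_def filter_sort filter_pair_upt rev_filter)

lemma alternate_clique:
  assumes "x < y" "y < m"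
  shows "alternate_in word x y"
  using assms d_less filter_word[of x y]
  by (simp add: alternate_in_iff_distinct_adj filter_pair_upt key_before_def key_after_def del: upt_Suc)

lemma not_alternate_independent:
  assumes "s < t" "t \<le> m - d"
  shows "\<not> alternate_in word (m + s) (m + t)"
  using assms d_less filter_word[of "m + s" "m + t"]
  by (simp add: alternate_in_iff_distinct_adj filter_pair_upt key_before_def key_after_def del: upt_Suc)

lemma alternate_mixed:
  assumes "x < m" "s \<le> m - d"
  shows "alternate_in word (m + s) x \<longleftrightarrow> s \<le> x \<and> x \<le> s + d - 1"
  unfolding alternate_in_commute[of word "m + s"]
  using assms d_less d_pos filter_word[of x "m + s"]
  by (simp add: alternate_in_iff_distinct_adj filter_pair_upt key_before_def key_after_def del: upt_Suc)

definition vertices :: "nat set" where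
  "vertices = {..<2 * m - d + 1}"

definition edge :: "nat \<Rightarrow> nat \<Rightarrow> bool" where
  "edge u v \<longleftrightarrow> u \<in> vertices \<and> v \<in> vertices \<and> u \<noteq> v \<and> alternate_in word u v"

lemma represented_by_word: "word_represents vertices edge word"
proof -
  have "set word = vertices"
    using d_less by (auto simp: word_def vertices_def)
  then show ?thesis
    by (auto simp: word_represents_def edge_def)
qed

lemma independent_vertexE:
  assumes "v \<in> {m..<2 * m - d + 1}"
  obtains s where "s \<le> m - d" "v = m + s"
  using assms d_less by (intro that[of "v - m"]) auto

lemma not_edge_independent:
  assumes "s \<le> m - d" "t \<le> m - d"
  shows "\<not> edge (m + s) (m + t)"
proof -
  consider "s < t" | "t < s" | "s = t"
    by linarith
  then show ?thesis
    using assms not_alternate_independent[of s t] not_alternate_independent[of t s]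
    by cases (auto simp: edge_def alternate_in_commute)
qed

lemma neighbourhood_independent:
  assumes s: "s \<le> m - d"
  shows "neighbourhood vertices edge (m + s) = {s..s + d - 1}"
proof (intro set_eqI iffI)
  fix u assume "u \<in> neighbourhood vertices edge (m + s)"
  then have u: "u \<in> vertices" "edge (m + s) u"
    by (auto simp: neighbourhood_def)
  have "u < m"
  proof (rule ccontr)
    assume "\<not> u < m"
    then have "u \<in> {m..<2 * m - d + 1}"
      using u(1) by (simp add: vertices_def)
    then obtain t where "t \<le> m - d" "u = m + t"
      by (rule independent_vertexE)
    then show False
      using not_edge_independent s u(2) by blast
  qed
  then show "u \<in> {s..s + d - 1}"
    using u(2) alternate_mixed[OF _ s] by (auto simp: edge_def)
next
  fix u assume "u \<in> {s..s + d - 1}"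
  moreover have "s + d - 1 < m"
    using s d_pos d_less by linarith
  ultimately show "u \<in> neighbourhood vertices edge (m + s)"
    using alternate_mixed[OF _ s] d_less
    by (auto simp: neighbourhood_def edge_def vertices_def)
qed

lemma degree_independent:
  assumes "v \<in> {m..<2 * m - d + 1}"
  shows "degree vertices edge v = d"
proof -
  obtain s where "s \<le> m - d" "v = m + s"
    using assms by (rule independent_vertexE)
  then show ?thesis
    using d_pos by (simp add: degree_def neighbourhood_independent)
qed

lemma inj_on_neighbourhood: "inj_on (neighbourhood vertices edge) {m..<2 * m - d + 1}"
proof (rule inj_onI)
  fix u v assume "u \<in> {m..<2 * m - d + 1}" "v \<in> {m..<2 * m - d + 1}"
    and eq: "neighbourhood vertices edge u = neighbourhood vertices edge v"
  moreover obtain s t where "s \<le> m - d" "u = m + s" "t \<le> m - d" "v = m + t"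
    using calculation(1,2) by (metis independent_vertexE)
  ultimately show "u = v"
    using d_pos by (auto simp: neighbourhood_independent)
qed

lemma is_split_graph: "split_graph vertices edge {m..<2 * m - d + 1} {..<m}"
proof -
  have "simple_graph vertices edge"
    unfolding simple_graph_def edge_def vertices_def by (auto simp: alternate_in_commute)
  moreover have "edge x y" if "x < m" "y < m" "x \<noteq> y" for x y
  proof -
    have "alternate_in word x y"
      using that alternate_clique[of x y] alternate_clique[of y x] alternate_in_commute[of word y x]
      by (auto simp: linorder_neq_iff)
    moreover have "x < 2 * m - d + 1" "y < 2 * m - d + 1"
      using that d_less by linarith+
    ultimately show ?thesis
      using that by (simp add: edge_def vertices_def)
  qed
  then have "is_clique vertices edge {..<m}"
    using d_less unfolding is_clique_def vertices_def by auto
  moreover have "\<not> (\<forall>x\<in>{..<m}. edge v x)" if v: "v \<in> vertices - {..<m}" for v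
  proof
    assume adjacent: "\<forall>x\<in>{..<m}. edge v x"
    have "v \<in> {m..<2 * m - d + 1}"
      using v by (auto simp: vertices_def)
    then obtain s where s: "s \<le> m - d" "v = m + s"
      by (rule independent_vertexE)
    have "{..<m} \<subseteq> {s..s + d - 1}"
      using adjacent s neighbourhood_independent[OF s(1)] by (auto simp: neighbourhood_def edge_def)
    then show False
      using card_mono[of "{s..s + d - 1}" "{..<m}"] d_less d_pos by simp
  qed
  moreover have "\<not> edge u v" if "u \<in> {m..<2 * m - d + 1}" "v \<in> {m..<2 * m - d + 1}" for u v
    using that by (elim independent_vertexE) (simp add: not_edge_independent)
  then have "is_independent vertices edge {m..<2 * m - d + 1}"
    unfolding is_independent_def vertices_def by auto
  ultimately show ?thesis
    unfolding split_graph_def is_maximal_clique_def using d_less by (auto simp: vertices_def)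
qed

end

theorem split_graph_attaining_bound_exists:
  assumes "0 < d" "d < m"
  shows "\<exists>(V :: nat set) E I K S.
      split_graph V E I K \<and> card K = m \<and> word_representable V E \<and>
      S \<subseteq> I \<and> (\<forall>v\<in>S. degree V E v = d) \<and> inj_on (neighbourhood V E) S
      \<and> card S = m - d + 1"
proof -
  interpret split_construction m d
    using assms by unfold_locales
  show ?thesis
    using is_split_graph represented_by_word degree_independent inj_on_neighbourhood d_less
    by (intro exI[of _ vertices] exI[of _ edge] exI[of _ "{m..<2 * m - d + 1}"] exI[of _ "{..<m}"]
        exI[of _ "{m..<2 * m - d + 1}"]) (auto simp: word_representable_def)
qed

theorem theorem13:
  fixes m d :: nat
  assumes "m \<ge> 4" and "m + 1 < 2 * d" and "d \<le> m - 1"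
  shows "(\<forall>(V :: 'a set) E I K S.
            split_graph V E I K \<and> card K = m \<and> word_representable V E \<and>
            S \<subseteq> I \<and> (\<forall>v\<in>S. degree V E v = d) \<and> inj_on (neighbourhood V E) S
            \<longrightarrow> card S \<le> m - d + 1)
       \<and> (\<exists>(V :: nat set) E I K S.
            split_graph V E I K \<and> card K = m \<and> word_representable V E \<and>
            S \<subseteq> I \<and> (\<forall>v\<in>S. degree V E v = d) \<and> inj_on (neighbourhood V E) S
            \<and> card S = m - d + 1)"
proof (intro conjI allI impI)
  fix V :: "'a set" and E I K S
  assume "split_graph V E I K \<and> card K = m \<and> word_representable V E \<and>
    S \<subseteq> I \<and> (\<forall>v\<in>S. degree V E v = d) \<and> inj_on (neighbourhood V E) S"
  then show "card S \<le> m - d + 1"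
    using card_distinct_neighbourhoods_le[of V E I K S d] assms by auto
qed (use assms in \<open>intro split_graph_attaining_bound_exists; linarith\<close>)

end
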